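(* For any pairwise distinct complex numbers $x_1,\dots,x_M$ and any function $f$ for which the expressions are defined, $$\mathcal A^{\pm}_{\{x\}}[f]=\mathcal A^{\mp}_{\{x\}}\!\left[-\frac{E^\pm_{\{x\}}}{E^\mp_{\{x\}}}f\right].$$
   Context: Let $\eta\in\mathbb C\setminus\{0\}$. For a family $\{x\}=\{x_1,\dots,x_M\}$ of complex numbers and $y\in\mathbb C$, $E^\pm_{\{x\}}(y)=\prod_{n=1}^M\frac{y-x_n\pm\eta}{y-x_n}$; at $y=x_m$ the ratio $E^\pm_{\{x\}}(x_m)/E^\mp_{\{x\}}(x_m)$ means $\prod_{n=1}^M\frac{x_m-x_n\pm\eta}{x_m-x_n\mp\eta}$ (the factor $n=m$ equals $-1$). With $V(x_1,\dots,x_M)=\prod_{1\le b<a\le M}(x_a-x_b)$ and $f$ a function defined at the $x_a$, $\mathcal A^\pm_{\{x\}}[f]=\det_{1\le a,b\le M}\big[x_a^{b-1}-f(x_a)(x_a\pm\eta)^{b-1}\big]/V(x_1,\dots,x_M)$. Here $-\frac{E^\pm_{\{x\}}}{E^\mp_{\{x\}}}f$ denotes the function $x_a\mapsto-\frac{E^\pm_{\{x\}}(x_a)}{E^\mp_{\{x\}}(x_a)}f(x_a)$. *)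

theory Defs
  imports Complex_Main "Jordan_Normal_Form.Determinant"
begin

(* Families x_1..x_M are represented as x :: nat => complex on indices 0..<M
   (index a here corresponds to a+1 in the paper). *)

definition vandermonde :: "nat \<Rightarrow> (nat \<Rightarrow> complex) \<Rightarrow> complex" where
  "vandermonde M x = (\<Prod>a<M. \<Prod>b<a. x a - x b)"

(* A^{\<pm>}_{x}[f] with h = \<pm>\<eta> :
   det_{a,b}[ x_a^(b-1) - f(x_a) (x_a + h)^(b-1) ] / V(x_1,...,x_M) *)
definition calA :: "complex \<Rightarrow> nat \<Rightarrow> (nat \<Rightarrow> complex) \<Rightarrow> (complex \<Rightarrow> complex) \<Rightarrow> complex" where
  "calA h M x f =
     det (mat M M (\<lambda>(a, b). x a ^ b - f (x a) * (x a + h) ^ b)) / vandermonde M x"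

definition calE :: "complex \<Rightarrow> nat \<Rightarrow> (nat \<Rightarrow> complex) \<Rightarrow> complex \<Rightarrow> complex" where
  "calE h M x y = (\<Prod>n<M. (y - x n + h) / (y - x n))"

(* The ratio E^{\<pm>}/E^{\<mp>} (h = \<pm>\<eta>), with the paper's convention at y = x_m:
   prod_n (y - x_n + h)/(y - x_n - h); the factor n = m equals -1 there. *)
definition calEratio :: "complex \<Rightarrow> nat \<Rightarrow> (nat \<Rightarrow> complex) \<Rightarrow> complex \<Rightarrow> complex" where
  "calEratio h M x y = (\<Prod>n<M. (y - x n + h) / (y - x n - h))"

end

theory Submission imports Defs begin

text \<open>Expanding the determinant multilinearly in its rows, both sides become sums over subsets
  \<open>S\<close> of the rows in which \<open>x\<^sub>a\<close> is shifted by \<open>\<pm>\<eta>\<close>; each summand is a Vandermonde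
  determinant. Shifting the rows in \<open>S\<close> by \<open>+\<eta>\<close> instead of \<open>-\<eta>\<close> multiplies the Vandermonde
  determinant by \<open>\<Prod>\<^sub>a\<^sub>\<in>\<^sub>S (-E\<^sup>+/E\<^sup>-)(x\<^sub>a)\<close>: for \<open>a \<in> S\<close>, \<open>b \<notin> S\<close> the factor
  \<open>x\<^sub>a - x\<^sub>b + \<eta>\<close> becomes \<open>x\<^sub>a - x\<^sub>b - \<eta>\<close>, and pairs inside \<open>S\<close> contribute ratios that cancel.
  So the summands agree term by term.\<close>

lemma det_mat_scale_rows:
  fixes g :: "nat \<Rightarrow> nat \<Rightarrow> 'a::comm_ring_1"
  shows "det (mat n n (\<lambda>(i, j). c i * g i j)) = prod c {..<n} * det (mat n n (\<lambda>(i, j). g i j))"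
proof -
  have "det (mat n n (\<lambda>(i, j). c i * g i j)) =
      (\<Sum>p\<in>{p. p permutes {0..<n}}. signof p * (\<Prod>i = 0..<n. c i * g i (p i)))"
    by (subst det_def'[of _ n]) auto
  also have "\<dots> = (\<Sum>p\<in>{p. p permutes {0..<n}}. prod c {..<n} * (signof p * (\<Prod>i = 0..<n. g i (p i))))"
    by (rule sum.cong) (auto simp: prod.distrib atLeast0LessThan)
  also have "\<dots> = prod c {..<n} * det (mat n n (\<lambda>(i, j). g i j))"
    by (subst det_def'[of _ n]) (auto simp: sum_distrib_left)
  finally show ?thesis .
qed

lemma det_mat_add_scaled_rows:
  fixes u v :: "nat \<Rightarrow> nat \<Rightarrow> 'a::comm_ring_1"
  shows "det (mat n n (\<lambda>(a, b). u a b + c a * v a b)) =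
    (\<Sum>S\<in>Pow {..<n}. prod c S * det (mat n n (\<lambda>(a, b). if a \<in> S then v a b else u a b)))"
proof -
  have split: "(\<Prod>i<n. if i \<in> S then v i (p i) else u i (p i)) =
      (\<Prod>i\<in>S. v i (p i)) * (\<Prod>i\<in>{..<n}-S. u i (p i))" if "S \<subseteq> {..<n}" for S p
    using that by (simp add: prod.If_cases Diff_eq Int_commute inf.absorb1 inf.absorb2)
  have "det (mat n n (\<lambda>(a, b). u a b + c a * v a b)) =
      (\<Sum>p\<in>{p. p permutes {..<n}}. signof p * (\<Prod>i<n. c i * v i (p i) + u i (p i)))"
    by (subst det_def'[of _ n]) (auto simp: atLeast0LessThan add.commute)
  also have "\<dots> = (\<Sum>p\<in>{p. p permutes {..<n}}. signof p *
      (\<Sum>S\<in>Pow {..<n}. (\<Prod>i\<in>S. c i * v i (p i)) * (\<Prod>i\<in>{..<n}-S. u i (p i))))"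
    by (simp add: prod_add)
  also have "\<dots> = (\<Sum>S\<in>Pow {..<n}. \<Sum>p\<in>{p. p permutes {..<n}}.
      prod c S * (signof p * (\<Prod>i<n. if i \<in> S then v i (p i) else u i (p i))))"
    by (subst sum.swap) (auto simp: split sum_distrib_left prod.distrib intro!: sum.cong)
  also have "\<dots> = (\<Sum>S\<in>Pow {..<n}. prod c S * det (mat n n (\<lambda>(a, b). if a \<in> S then v a b else u a b)))"
    by (rule sum.cong[OF refl], subst det_def'[of _ n])
      (auto simp: sum_distrib_left atLeast0LessThan intro!: sum.cong prod.cong)
  finally show ?thesis .
qed

text \<open>Right multiplication by the unitriangular matrix with \<open>-y\<^sub>M\<close> on the superdiagonal subtracts
  \<open>y\<^sub>M\<close> times column \<open>b - 1\<close> from column \<open>b\<close>.\<close>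

lemma det_vandermonde_column_reduction:
  fixes y :: "nat \<Rightarrow> 'a::comm_ring_1"
  shows "det (mat (Suc M) (Suc M) (\<lambda>(a, b). y a ^ b)) =
    det (mat (Suc M) (Suc M) (\<lambda>(a, b). if b = 0 then 1 else y a ^ (b - 1) * (y a - y M)))"
    (is "det ?A = det ?B")
proof -
  define U :: "'a mat" where
    "U = mat (Suc M) (Suc M) (\<lambda>(i, j). if i = j then 1 else if Suc i = j then - y M else 0)"
  have U: "U \<in> carrier_mat (Suc M) (Suc M)" by (simp add: U_def)
  have "upper_triangular U" unfolding upper_triangular_def U_def by auto
  then have "det U = prod_list (diag_mat U)" using det_upper_triangular U by blast
  also have "diag_mat U = map (\<lambda>_. 1) [0..<Suc M]"
    unfolding diag_mat_def U_def by (intro map_cong) auto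
  finally have det_U: "det U = 1" by (simp add: map_replicate_const)
  have "?A * U = ?B"
  proof (rule eq_matI)
    fix a b assume "a < dim_row ?B" "b < dim_col ?B"
    then have ab: "a < Suc M" "b < Suc M" by auto
    have "(?A * U) $$ (a, b) = (\<Sum>k<Suc M. y a ^ k * (if k = b then 1 else if Suc k = b then - y M else 0))"
      using ab by (simp add: U_def scalar_prod_def atLeast0LessThan)
    also have "\<dots> = ?B $$ (a, b)"
      using ab by (cases b) (auto simp: if_distrib sum.If_cases algebra_simps)
    finally show "(?A * U) $$ (a, b) = ?B $$ (a, b)" .
  qed (auto simp: U_def)
  then show ?thesis using det_mult[OF _ U, of ?A] det_U by simp
qed

lemma det_vandermonde_Suc:
  fixes y :: "nat \<Rightarrow> 'a::comm_ring_1"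
  shows "det (mat (Suc M) (Suc M) (\<lambda>(a, b). y a ^ b)) =
    (\<Prod>a<M. y M - y a) * det (mat M M (\<lambda>(a, b). y a ^ b))"
proof -
  define B where "B = mat (Suc M) (Suc M) (\<lambda>(a, b). if b = 0 then 1 else y a ^ (b - 1) * (y a - y M))"
  have B: "B \<in> carrier_mat (Suc M) (Suc M)" by (simp add: B_def)
  have "det B = (\<Sum>j<Suc M. B $$ (M, j) * cofactor B M j)"
    using laplace_expansion_row[OF B] by simp
  also have "\<dots> = cofactor B M 0"
    by (subst sum.lessThan_Suc_shift) (simp add: B_def)
  also have "mat_delete B M 0 = mat M M (\<lambda>(a, b). (y a - y M) * y a ^ b)"
    by (rule eq_matI) (auto simp: mat_delete_def B_def)
  then have "cofactor B M 0 = (-1) ^ M * (\<Prod>a<M. y a - y M) * det (mat M M (\<lambda>(a, b). y a ^ b))"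
    by (simp add: cofactor_def det_mat_scale_rows)
  also have "(-1) ^ M * (\<Prod>a<M. y a - y M) = (\<Prod>a<M. y M - y a)"
  proof -
    have "(\<Prod>a<M. y M - y a) = (\<Prod>a<M. (-1) * (y a - y M))" by simp
    then show ?thesis by (simp only: prod.distrib prod_constant card_lessThan)
  qed
  finally show ?thesis by (simp add: B_def det_vandermonde_column_reduction)
qed

lemma det_vandermonde:
  fixes y :: "nat \<Rightarrow> 'a::comm_ring_1"
  shows "det (mat M M (\<lambda>(a, b). y a ^ b)) = (\<Prod>a<M. \<Prod>b<a. y a - y b)"
  by (induction M) (simp_all add: det_vandermonde_Suc det_dim_zero mult.commute)

definition shift_on :: "nat set \<Rightarrow> 'a::plus \<Rightarrow> (nat \<Rightarrow> 'a) \<Rightarrow> nat \<Rightarrow> 'a" where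
  "shift_on S h x a = (if a \<in> S then x a + h else x a)"

lemma det_mat_add_scaled_shifted_powers:
  fixes x :: "nat \<Rightarrow> complex"
  shows "det (mat M M (\<lambda>(a, b). x a ^ b + c a * (x a + h) ^ b)) =
    (\<Sum>S\<in>Pow {..<M}. prod c S * vandermonde M (shift_on S h x))"
proof -
  have "mat M M (\<lambda>(a, b). if a \<in> S then (x a + h) ^ b else x a ^ b) =
      mat M M (\<lambda>(a, b). shift_on S h x a ^ b)" for S
    by (rule cong_mat) (auto simp: shift_on_def)
  then show ?thesis
    by (simp add: det_mat_add_scaled_rows det_vandermonde vandermonde_def)
qed

lemma prod_lessThan_square:
  fixes g :: "nat \<Rightarrow> nat \<Rightarrow> 'a::comm_monoid_mult"
  shows "(\<Prod>a<M. \<Prod>n<M. g a n) = (\<Prod>a<M. g a a) * (\<Prod>a<M. \<Prod>b<a. g a b * g b a)"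
  by (induction M) (simp_all add: prod.distrib ac_simps)

lemma shift_on_diff_flip:
  fixes x :: "nat \<Rightarrow> 'a::field" and S :: "nat set"
  assumes "x a - x b \<noteq> h" and "x b - x a \<noteq> h"
  defines "\<rho> \<equiv> \<lambda>a b. if a \<in> S then (x a - x b + h) / (x a - x b - h) else 1"
  shows "\<rho> a b * \<rho> b a * (shift_on S (-h) x a - shift_on S (-h) x b) =
    shift_on S h x a - shift_on S h x b"
proof -
  have nz: "x a - x b - h \<noteq> 0" "x a - x b + h \<noteq> 0" "x b - x a - h \<noteq> 0" "x b - x a + h \<noteq> 0"
    using assms(1,2) by (auto simp: algebra_simps)
  have swap: "(x b - x a + h) / (x b - x a - h) = (x a - x b - h) / (x a - x b + h)"
    using nz by (simp add: field_simps)
  have "(x a - x b + h) / (x a - x b - h) * ((x a - x b - h) / (x a - x b + h)) = 1"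
    using nz by simp
  then show ?thesis
    unfolding \<rho>_def shift_on_def swap
    using nz by (cases "a \<in> S"; cases "b \<in> S") (simp_all add: field_simps)
qed

lemma vandermonde_shift_on_flip:
  fixes x :: "nat \<Rightarrow> complex"
  assumes "h \<noteq> 0" and "\<And>a b. a < M \<Longrightarrow> b < M \<Longrightarrow> x a - x b \<noteq> h" and "S \<subseteq> {..<M}"
  shows "(-1) ^ card S * vandermonde M (shift_on S h x) =
    (\<Prod>a\<in>S. calEratio h M x (x a)) * vandermonde M (shift_on S (-h) x)"
proof -
  define \<rho> where "\<rho> = (\<lambda>a b. if a \<in> S then (x a - x b + h) / (x a - x b - h) else 1)"
  have "(\<Prod>a\<in>S. calEratio h M x (x a)) = (\<Prod>a<M. if a \<in> S then calEratio h M x (x a) else 1)"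
    using assms(3) by (simp add: prod.If_cases inf.absorb2)
  also have "\<dots> = (\<Prod>a<M. \<Prod>n<M. \<rho> a n)"
    by (rule prod.cong) (auto simp: \<rho>_def calEratio_def)
  also have "\<dots> = (\<Prod>a<M. \<rho> a a) * (\<Prod>a<M. \<Prod>b<a. \<rho> a b * \<rho> b a)"
    by (rule prod_lessThan_square)
  also have "(\<Prod>a<M. \<rho> a a) = (-1) ^ card S"
    using assms(1,3) by (simp add: \<rho>_def prod.If_cases inf.absorb2)
  finally have E: "(\<Prod>a\<in>S. calEratio h M x (x a)) = (-1) ^ card S * (\<Prod>a<M. \<Prod>b<a. \<rho> a b * \<rho> b a)" .
  have "(\<Prod>a<M. \<Prod>b<a. \<rho> a b * \<rho> b a) * vandermonde M (shift_on S (-h) x) = vandermonde M (shift_on S h x)"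
    using shift_on_diff_flip[of x _ _ h S] assms(2)
    by (simp add: vandermonde_def \<rho>_def prod.distrib[symmetric])
  then show ?thesis
    unfolding E by (simp add: mult.assoc)
qed

lemma calA_reflect:
  assumes "h \<noteq> 0" and "\<And>a b. a < M \<Longrightarrow> b < M \<Longrightarrow> x a - x b \<noteq> h"
  shows "calA h M x f = calA (-h) M x (\<lambda>y. - calEratio h M x y * f y)"
proof -
  have summand: "(\<Prod>a\<in>S. - f (x a)) * vandermonde M (shift_on S h x) =
      (\<Prod>a\<in>S. calEratio h M x (x a) * f (x a)) * vandermonde M (shift_on S (-h) x)"
    if "S \<subseteq> {..<M}" for S
    using vandermonde_shift_on_flip[OF assms that] by (simp add: prod_uminus prod.distrib ac_simps)
  have "det (mat M M (\<lambda>(a, b). x a ^ b + (- f (x a)) * (x a + h) ^ b)) =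
      det (mat M M (\<lambda>(a, b). x a ^ b + (calEratio h M x (x a) * f (x a)) * (x a + - h) ^ b))"
    unfolding det_mat_add_scaled_shifted_powers using summand by (intro sum.cong) auto
  then show ?thesis
    by (simp add: calA_def)
qed

theorem mainTheorem5:
  fixes \<eta> :: complex and M :: nat and x :: "nat \<Rightarrow> complex" and f :: "complex \<Rightarrow> complex"
  assumes "\<eta> \<noteq> 0"
    and "inj_on x {..<M}"
    and "\<And>a b. a < M \<Longrightarrow> b < M \<Longrightarrow> x a - x b \<noteq> \<eta>"
  shows "calA \<eta> M x f = calA (-\<eta>) M x (\<lambda>y. - calEratio \<eta> M x y * f y)
       \<and> calA (-\<eta>) M x f = calA \<eta> M x (\<lambda>y. - calEratio (-\<eta>) M x y * f y)"
proof
  show "calA \<eta> M x f = calA (-\<eta>) M x (\<lambda>y. - calEratio \<eta> M x y * f y)"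
    using calA_reflect[OF assms(1,3)] .
  have "x a - x b \<noteq> - \<eta>" if "a < M" "b < M" for a b
    using assms(3)[OF that(2,1)] by (auto simp: algebra_simps)
  then show "calA (-\<eta>) M x f = calA \<eta> M x (\<lambda>y. - calEratio (-\<eta>) M x y * f y)"
    using calA_reflect[of "-\<eta>" M x f] assms(1) by simp
qed

end
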